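(* Fix $L,V,W,K>0$, $\pi\in(0,1)$, $k_0\in[0,K]$, and let $\bar g=\min\{\phi_1,\pi C,\phi_2\}$ with $\phi_1=\frac{k_0}{k_1}\pi C$, $\phi_2=\frac{K-k_0}{K-k_2}\pi C$, where $k_1\in[\pi\bar K,\bar K]$ and $k_2\in[\bar K,K-\pi\frac CW]$ are as in the context (depending on the cycle length $T$). Then: (1) If $k_0\in[0,\pi\bar K)$, then $\bar g=\phi_1$, which decreases in $k_1$ and is independent of $k_2$; the global maximum of $\bar g$ is $Vk_0$, attained when $T=\frac1{j_1}\frac LV$ (positive integer $j_1$), and the global minimum is $\pi Vk_0$, attained when $T\ge\frac1\pi\frac LV$. (2) If $k_0\in[\pi\bar K,\bar K)$, then $\bar g=\min\{\phi_1,\pi C\}$, which is constant for $k_1\in[\pi\bar K,k_0]$, decreasing for $k_1\in(k_0,\bar K]$, and independent of $k_2$; the global maximum is $\pi C$, and the global minimum is $\pi Vk_0$, attained when $T\ge\frac1\pi\frac LV$. (3) If $k_0=\bar K$, then $\bar g=\pi C$ for all $k_1,k_2$. (4) If $k_0\in(\bar K,K-\pi\frac CW]$, then $\bar g=\min\{\phi_2,\pi C\}$, which is increasing for $k_2\in[\bar K,k_0)$, constant for $k_2\in[k_0,K-\pi\frac CW]$, and independent of $k_1$; the global maximum is $\pi C$, and the global minimum is $\pi(K-k_0)W$, attained when $T\ge\frac1\pi\frac LW$. (5) If $k_0\in(K-\pi\frac CW,K]$, then $\bar g=\phi_2$, which increases in $k_2$ and is independent of $k_1$; the global maximum is $(K-k_0)W$,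 attained when $T=\frac1{j_2}\frac LW$ (positive integer $j_2$), and the global minimum is $\pi(K-k_0)W$, attained when $T\ge\frac1\pi\frac LW$.
   Context: $\bar K=\frac{W}{V+W}K$, $C=V\bar K$. For cycle length $T>0$: $\frac LV=(j_1+\alpha_1)T$, $j_1=\lfloor L/(VT)\rfloor$, $0\le\alpha_1<1$; $\frac LW=(j_2+\alpha_2)T$, $j_2=\lfloor L/(WT)\rfloor$, $0\le\alpha_2<1$; $k_1=\frac{j_1+\min\{\alpha_1/\pi,1\}}{j_1+\alpha_1}\pi\bar K$, $k_2=K-\frac{j_2+\min\{\alpha_2/\pi,1\}}{j_2+\alpha_2}\pi\frac CW$. Here $\bar g$ is the average flow-rate in stationary states (periodic with period $T$) of a ring road of length $L$ with LWR traffic, triangular fundamental diagram $\min\{Vk,(K-k)W\}$, average density $k_0$, and a pretimed signal with cycle length $T$ and effective green ratio $\pi$. *)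

theory Defs
  imports Complex_Main
begin

text \<open>Parameters: L (ring length), V (free-flow speed), W (backward wave speed),
  K (jam density), p (effective green ratio, the paper's pi), k0 (average density),
  T (cycle length).\<close>

definition Kbar :: "real \<Rightarrow> real \<Rightarrow> real \<Rightarrow> real" where
  "Kbar V W K = W / (V + W) * K"

definition Cap :: "real \<Rightarrow> real \<Rightarrow> real \<Rightarrow> real" where
  "Cap V W K = V * Kbar V W K"

definition k1T :: "real \<Rightarrow> real \<Rightarrow> real \<Rightarrow> real \<Rightarrow> real \<Rightarrow> real \<Rightarrow> real" where
  "k1T L V W K p T =
     (let x = L / (V * T); j1 = real_of_int \<lfloor>x\<rfloor>; a1 = x - j1
      in (j1 + min (a1 / p) 1) / (j1 + a1) * p * Kbar V W K)"

definition k2T :: "real \<Rightarrow> real \<Rightarrow> real \<Rightarrow> real \<Rightarrow> real \<Rightarrow> real \<Rightarrow> real" where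
  "k2T L V W K p T =
     (let x = L / (W * T); j2 = real_of_int \<lfloor>x\<rfloor>; a2 = x - j2
      in K - (j2 + min (a2 / p) 1) / (j2 + a2) * p * (Cap V W K / W))"

definition phi1 :: "real \<Rightarrow> real \<Rightarrow> real \<Rightarrow> real \<Rightarrow> real \<Rightarrow> real \<Rightarrow> real" where
  "phi1 V W K p k0 k1 = k0 / k1 * p * Cap V W K"

definition phi2 :: "real \<Rightarrow> real \<Rightarrow> real \<Rightarrow> real \<Rightarrow> real \<Rightarrow> real \<Rightarrow> real" where
  "phi2 V W K p k0 k2 = (K - k0) / (K - k2) * p * Cap V W K"

text \<open>average flow as a function of (k1, k2)\<close>
definition gfun :: "real \<Rightarrow> real \<Rightarrow> real \<Rightarrow> real \<Rightarrow> real \<Rightarrow> real \<Rightarrow> real \<Rightarrow> real" where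
  "gfun V W K p k0 k1 k2 =
     min (phi1 V W K p k0 k1) (min (p * Cap V W K) (phi2 V W K p k0 k2))"

definition gbar :: "real \<Rightarrow> real \<Rightarrow> real \<Rightarrow> real \<Rightarrow> real \<Rightarrow> real \<Rightarrow> real \<Rightarrow> real" where
  "gbar L V W K p k0 T = gfun V W K p k0 (k1T L V W K p T) (k2T L V W K p T)"

end

theory Submission
  imports Defs
begin

text \<open>
  With \<open>x = L / (V T)\<close> one has \<open>k\<^sub>1 = f(x) \<pi> K\<^sub>b\<close> for a factor \<open>1 \<le> f \<le> 1/\<pi>\<close> that
  equals \<open>1\<close> at positive integers and \<open>1/\<pi>\<close> for \<open>x \<le> \<pi>\<close>; so \<open>k\<^sub>1\<close> ranges over
  \<open>[\<pi> K\<^sub>b, K\<^sub>b]\<close>, with the left end attained at \<open>T = L/(j V)\<close> and the right end for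
  \<open>T \<ge> L/(\<pi> V)\<close>. Likewise \<open>k\<^sub>2\<close> ranges over \<open>[K\<^sub>b, K - \<pi> C/W]\<close>.
  Since \<open>\<phi>\<^sub>1 \<le> \<pi> C\<close> iff \<open>k\<^sub>0 \<le> k\<^sub>1\<close> and \<open>\<phi>\<^sub>2 \<le> \<pi> C\<close> iff \<open>k\<^sub>2 \<le> k\<^sub>0\<close>, for
  \<open>k\<^sub>0 \<le> K\<^sub>b\<close> the term \<open>\<phi>\<^sub>2\<close> never binds and \<open>g = min \<phi>\<^sub>1(k\<^sub>1) (\<pi> C)\<close>, antitone
  in \<open>k\<^sub>1\<close>; for \<open>k\<^sub>0 \<ge> K\<^sub>b\<close> the situation is mirrored, \<open>\<phi>\<^sub>2\<close> being \<open>\<phi>\<^sub>1\<close> at the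
  reflected densities \<open>K - k\<^sub>0, K - k\<^sub>2\<close>. Each case then follows by evaluating
  \<open>\<phi>\<^sub>1, \<phi>\<^sub>2\<close> at the endpoints of these ranges.
\<close>

text \<open>With \<open>x = L / (V T) = j + \<alpha>\<close>, the paper's factor \<open>(j + min (\<alpha>/\<pi>) 1) / (j + \<alpha>)\<close>.\<close>
definition fill_factor :: "real \<Rightarrow> real \<Rightarrow> real" where
  "fill_factor p x = (of_int \<lfloor>x\<rfloor> + min (frac x / p) 1) / x"

lemma fill_factor_bounds:
  assumes "0 < x" "0 < p" "p < 1"
  shows "1 \<le> fill_factor p x" "p * fill_factor p x \<le> 1"
proof -
  define j where "j = real_of_int \<lfloor>x\<rfloor>"
  have x_eq: "x = j + frac x" and "0 \<le> j"
    unfolding j_def frac_def using assms by auto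
  have "frac x \<le> frac x / p"
    using assms mult_left_le_one_le[OF frac_ge_0[of x], of p] by (simp add: le_divide_eq mult.commute)
  then have "x \<le> j + min (frac x / p) 1"
    using frac_lt_1[of x] x_eq by linarith
  then show "1 \<le> fill_factor p x"
    unfolding fill_factor_def j_def[symmetric] using assms by simp
  have "p * (j + min (frac x / p) 1) \<le> p * j + frac x"
    using assms mult_left_mono[of "min (frac x / p) 1" "frac x / p" p]
    by (simp add: distrib_left)
  also have "\<dots> \<le> x"
    using x_eq mult_left_le_one_le[OF \<open>0 \<le> j\<close>, of p] assms
    by (simp add: mult.commute)
  finally show "p * fill_factor p x \<le> 1"
    unfolding fill_factor_def j_def[symmetric] using assms by (simp add: divide_le_eq)
qed

lemma fill_factor_of_nat: "0 < j \<Longrightarrow> fill_factor p (real j) = 1"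
  unfolding fill_factor_def frac_def by simp

lemma fill_factor_below_ratio:
  assumes "0 < x" "x \<le> p" "p < 1"
  shows "fill_factor p x = 1 / p"
proof -
  have "\<lfloor>x\<rfloor> = 0" using assms by (simp add: floor_eq_iff)
  then show ?thesis
    unfolding fill_factor_def frac_def using assms by (simp add: min_def)
qed

lemma k1T_eq_fill_factor: "k1T L V W K p T = fill_factor p (L / (V * T)) * p * Kbar V W K"
  unfolding k1T_def fill_factor_def frac_def Let_def by simp

lemma k2T_eq_fill_factor: "k2T L V W K p T = K - fill_factor p (L / (W * T)) * p * (Cap V W K / W)"
  unfolding k2T_def fill_factor_def frac_def Let_def by simp

locale signalized_ring =
  fixes L V W K p :: real
  assumes L_pos: "0 < L" and V_pos: "0 < V" and W_pos: "0 < W" and K_pos: "0 < K"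
    and p_pos: "0 < p" and p_less_1: "p < 1"
begin

lemma Kbar_pos: "0 < Kbar V W K"
  unfolding Kbar_def using W_pos V_pos K_pos by simp

lemma Cap_pos: "0 < Cap V W K"
  unfolding Cap_def using V_pos Kbar_pos by simp

lemma green_Cap_pos: "0 < p * Cap V W K"
  using p_pos Cap_pos by simp

lemma green_Kbar_pos: "0 < p * Kbar V W K"
  using p_pos Kbar_pos by simp

lemma jam_edge_less_K: "K - p * Cap V W K / W < K"
  using green_Cap_pos W_pos by simp

lemma K_minus_Kbar: "K - Kbar V W K = Cap V W K / W"
proof -
  have "V + W \<noteq> 0" using V_pos W_pos by simp
  then have "K - Kbar V W K = V / (V + W) * K"
    unfolding Kbar_def by (simp add: field_simps)
  also have "\<dots> = Cap V W K / W"
    unfolding Cap_def Kbar_def using W_pos by simp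
  finally show ?thesis .
qed

lemma green_Kbar_less: "p * Kbar V W K < Kbar V W K"
  using p_less_1 Kbar_pos by simp

lemma Kbar_less_jam_edge: "Kbar V W K < K - p * Cap V W K / W"
  using K_minus_Kbar p_less_1 Cap_pos W_pos by (simp add: field_simps)

lemma k1T_mem:
  assumes "0 < T"
  shows "k1T L V W K p T \<in> {p * Kbar V W K .. Kbar V W K}"
proof -
  have "0 < L / (V * T)" using L_pos V_pos assms by simp
  note f = fill_factor_bounds[OF this p_pos p_less_1]
  show ?thesis
    unfolding k1T_eq_fill_factor
    using mult_right_mono[OF f(2), of "Kbar V W K"] f(1) p_pos Kbar_pos
    by (auto simp: mult.commute mult.left_commute)
qed

lemma k2T_mem:
  assumes "0 < T"
  shows "k2T L V W K p T \<in> {Kbar V W K .. K - p * Cap V W K / W}"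
proof -
  define r where "r = p * fill_factor p (L / (W * T))"
  have "0 < L / (W * T)" using L_pos W_pos assms by simp
  from fill_factor_bounds[OF this p_pos p_less_1] have "p \<le> r" "r \<le> 1"
    unfolding r_def using p_pos by auto
  moreover have "0 < Cap V W K / W" using Cap_pos W_pos by simp
  ultimately have "p * (Cap V W K / W) \<le> r * (Cap V W K / W)" "r * (Cap V W K / W) \<le> Cap V W K / W"
    using mult_right_mono[of p r "Cap V W K / W"] mult_right_mono[of r 1 "Cap V W K / W"] by auto
  moreover have "k2T L V W K p T = K - r * (Cap V W K / W)"
    unfolding k2T_eq_fill_factor r_def by simp
  ultimately show ?thesis using K_minus_Kbar by simp
qed

lemma k1T_period_fraction:
  assumes "0 < j"
  shows "k1T L V W K p (L / V / real j) = p * Kbar V W K"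
proof -
  have "L / (V * (L / V / real j)) = real j" using L_pos V_pos by simp
  then show ?thesis unfolding k1T_eq_fill_factor using fill_factor_of_nat[OF assms] by simp
qed

lemma k2T_period_fraction:
  assumes "0 < j"
  shows "k2T L V W K p (L / W / real j) = K - p * Cap V W K / W"
proof -
  have "L / (W * (L / W / real j)) = real j" using L_pos W_pos by simp
  then show ?thesis unfolding k2T_eq_fill_factor using fill_factor_of_nat[OF assms] by simp
qed

lemma k1T_long_cycle:
  assumes "L / (p * V) \<le> T"
  shows "k1T L V W K p T = Kbar V W K"
proof -
  have "0 < L / (p * V)" using L_pos p_pos V_pos by simp
  then have "0 < T" using assms by linarith
  then have "0 < L / (V * T)" "L / (V * T) \<le> p"
    using assms L_pos p_pos V_pos by (auto simp: field_simps)
  then show ?thesis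
    unfolding k1T_eq_fill_factor using fill_factor_below_ratio p_pos p_less_1 by simp
qed

lemma k2T_long_cycle:
  assumes "L / (p * W) \<le> T"
  shows "k2T L V W K p T = Kbar V W K"
proof -
  have "0 < L / (p * W)" using L_pos p_pos W_pos by simp
  then have "0 < T" using assms by linarith
  then have "0 < L / (W * T)" "L / (W * T) \<le> p"
    using assms L_pos p_pos W_pos by (auto simp: field_simps)
  then show ?thesis
    unfolding k2T_eq_fill_factor using fill_factor_below_ratio p_pos p_less_1 K_minus_Kbar by simp
qed

lemma phi1_le_green_Cap:
  "0 < k1 \<Longrightarrow> k0 \<le> k1 \<Longrightarrow> phi1 V W K p k0 k1 \<le> p * Cap V W K"
  unfolding phi1_def using mult_right_mono[of "k0 / k1" 1 "p * Cap V W K"] green_Cap_pos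
  by (simp add: mult.assoc)

lemma phi1_less_green_Cap:
  "0 < k1 \<Longrightarrow> k0 < k1 \<Longrightarrow> phi1 V W K p k0 k1 < p * Cap V W K"
  unfolding phi1_def using mult_strict_right_mono[of "k0 / k1" 1 "p * Cap V W K"] green_Cap_pos
  by (simp add: mult.assoc)

lemma green_Cap_le_phi1:
  "0 < k1 \<Longrightarrow> k1 \<le> k0 \<Longrightarrow> p * Cap V W K \<le> phi1 V W K p k0 k1"
  unfolding phi1_def using mult_right_mono[of 1 "k0 / k1" "p * Cap V W K"] green_Cap_pos
  by (simp add: mult.assoc)

lemma phi1_antimono:
  "0 \<le> k0 \<Longrightarrow> 0 < x \<Longrightarrow> x \<le> y \<Longrightarrow> phi1 V W K p k0 y \<le> phi1 V W K p k0 x"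
  unfolding phi1_def using green_Cap_pos
  by (simp add: mult.assoc mult_right_mono divide_left_mono)

lemma phi1_strict_antimono:
  "0 < k0 \<Longrightarrow> 0 < x \<Longrightarrow> x < y \<Longrightarrow> phi1 V W K p k0 y < phi1 V W K p k0 x"
  unfolding phi1_def using green_Cap_pos
  by (simp add: mult.assoc mult_strict_right_mono divide_strict_left_mono)

lemma phi1_at_green_Kbar: "phi1 V W K p k0 (p * Kbar V W K) = V * k0"
  unfolding phi1_def Cap_def using p_pos Kbar_pos by simp

lemma phi1_at_Kbar: "phi1 V W K p k0 (Kbar V W K) = p * V * k0"
  unfolding phi1_def Cap_def using Kbar_pos by simp

lemma phi2_eq_phi1_reflected: "phi2 V W K p k0 k2 = phi1 V W K p (K - k0) (K - k2)"
  unfolding phi1_def phi2_def ..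

lemma phi2_at_jam_edge: "phi2 V W K p k0 (K - p * Cap V W K / W) = (K - k0) * W"
  unfolding phi2_def using p_pos Cap_pos W_pos by simp

lemma phi2_at_Kbar: "phi2 V W K p k0 (Kbar V W K) = p * (K - k0) * W"
  unfolding phi2_def K_minus_Kbar using Cap_pos W_pos by simp

lemma phi2_le_green_Cap:
  "k2 < K \<Longrightarrow> k2 \<le> k0 \<Longrightarrow> phi2 V W K p k0 k2 \<le> p * Cap V W K"
  unfolding phi2_eq_phi1_reflected by (rule phi1_le_green_Cap) auto

lemma phi2_less_green_Cap:
  "k2 < K \<Longrightarrow> k2 < k0 \<Longrightarrow> phi2 V W K p k0 k2 < p * Cap V W K"
  unfolding phi2_eq_phi1_reflected by (rule phi1_less_green_Cap) auto

lemma green_Cap_le_phi2: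
  "k2 < K \<Longrightarrow> k0 \<le> k2 \<Longrightarrow> p * Cap V W K \<le> phi2 V W K p k0 k2"
  unfolding phi2_eq_phi1_reflected by (rule green_Cap_le_phi1) auto

lemma phi2_mono:
  "k0 \<le> K \<Longrightarrow> y < K \<Longrightarrow> x \<le> y \<Longrightarrow> phi2 V W K p k0 x \<le> phi2 V W K p k0 y"
  unfolding phi2_eq_phi1_reflected by (rule phi1_antimono) auto

lemma phi2_strict_mono:
  "k0 < K \<Longrightarrow> y < K \<Longrightarrow> x < y \<Longrightarrow> phi2 V W K p k0 x < phi2 V W K p k0 y"
  unfolding phi2_eq_phi1_reflected by (rule phi1_strict_antimono) auto

lemma gfun_eq_min_phi1:
  "k0 \<le> k2 \<Longrightarrow> k2 < K \<Longrightarrow> gfun V W K p k0 k1 k2 = min (phi1 V W K p k0 k1) (p * Cap V W K)"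
  unfolding gfun_def using green_Cap_le_phi2[of k2 k0] by (simp add: min_absorb1)

lemma gfun_eq_min_phi2:
  "0 < k1 \<Longrightarrow> k1 \<le> k0 \<Longrightarrow> gfun V W K p k0 k1 k2 = min (phi2 V W K p k0 k2) (p * Cap V W K)"
  unfolding gfun_def using green_Cap_le_phi1[of k1 k0] by (simp add: min_def)

lemma gbar_eq_min_phi1:
  assumes "k0 \<le> Kbar V W K" "0 < T"
  shows "gbar L V W K p k0 T = min (phi1 V W K p k0 (k1T L V W K p T)) (p * Cap V W K)"
  unfolding gbar_def using assms k2T_mem[OF assms(2)] jam_edge_less_K
  by (intro gfun_eq_min_phi1) auto

lemma gbar_eq_min_phi2:
  assumes "Kbar V W K \<le> k0" "0 < T"
  shows "gbar L V W K p k0 T = min (phi2 V W K p k0 (k2T L V W K p T)) (p * Cap V W K)"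
  unfolding gbar_def using assms k1T_mem[OF assms(2)] green_Kbar_pos
  by (intro gfun_eq_min_phi2) auto

lemma green_free_flow_le_green_Cap:
  "k0 \<le> Kbar V W K \<Longrightarrow> p * V * k0 \<le> p * Cap V W K"
  unfolding Cap_def using p_pos V_pos by simp

lemma green_congested_flow_le_green_Cap:
  "Kbar V W K \<le> k0 \<Longrightarrow> p * (K - k0) * W \<le> p * Cap V W K"
proof -
  assume "Kbar V W K \<le> k0"
  then have "(K - k0) * W \<le> (K - Kbar V W K) * W" using W_pos by simp
  then show ?thesis unfolding K_minus_Kbar using p_pos W_pos by simp
qed

lemma gbar_upper_bound_V:
  assumes "0 \<le> k0" "k0 \<le> Kbar V W K" "0 < T"
  shows "gbar L V W K p k0 T \<le> min (V * k0) (p * Cap V W K)"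
proof -
  have "phi1 V W K p k0 (k1T L V W K p T) \<le> phi1 V W K p k0 (p * Kbar V W K)"
    using k1T_mem[OF assms(3)] green_Kbar_pos assms(1) by (intro phi1_antimono) auto
  then show ?thesis unfolding gbar_eq_min_phi1[OF assms(2,3)] phi1_at_green_Kbar by simp
qed

lemma gbar_period_fraction_V:
  assumes "k0 \<le> Kbar V W K" "0 < j"
  shows "gbar L V W K p k0 (L / V / real j) = min (V * k0) (p * Cap V W K)"
proof -
  have "0 < L / V / real j" using L_pos V_pos assms(2) by simp
  from gbar_eq_min_phi1[OF assms(1) this] show ?thesis
    unfolding k1T_period_fraction[OF assms(2)] phi1_at_green_Kbar .
qed

lemma gbar_lower_bound_V:
  assumes "0 \<le> k0" "k0 \<le> Kbar V W K" "0 < T"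
  shows "p * V * k0 \<le> gbar L V W K p k0 T"
proof -
  have "phi1 V W K p k0 (Kbar V W K) \<le> phi1 V W K p k0 (k1T L V W K p T)"
    using k1T_mem[OF assms(3)] green_Kbar_pos assms(1) by (intro phi1_antimono) auto
  then show ?thesis
    unfolding gbar_eq_min_phi1[OF assms(2,3)] phi1_at_Kbar
    using green_free_flow_le_green_Cap[OF assms(2)] by simp
qed

lemma gbar_long_cycle_V:
  assumes "k0 \<le> Kbar V W K" "L / (p * V) \<le> T"
  shows "gbar L V W K p k0 T = p * V * k0"
proof -
  have "0 < L / (p * V)" using L_pos p_pos V_pos by simp
  then have "0 < T" using assms(2) by linarith
  from gbar_eq_min_phi1[OF assms(1) this] show ?thesis
    unfolding k1T_long_cycle[OF assms(2)] phi1_at_Kbar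
    using green_free_flow_le_green_Cap[OF assms(1)] by simp
qed

lemma gbar_upper_bound_W:
  assumes "Kbar V W K \<le> k0" "k0 \<le> K" "0 < T"
  shows "gbar L V W K p k0 T \<le> min ((K - k0) * W) (p * Cap V W K)"
proof -
  have "phi2 V W K p k0 (k2T L V W K p T) \<le> phi2 V W K p k0 (K - p * Cap V W K / W)"
    using k2T_mem[OF assms(3)] jam_edge_less_K assms(2) by (intro phi2_mono) auto
  then show ?thesis unfolding gbar_eq_min_phi2[OF assms(1,3)] phi2_at_jam_edge by simp
qed

lemma gbar_period_fraction_W:
  assumes "Kbar V W K \<le> k0" "0 < j"
  shows "gbar L V W K p k0 (L / W / real j) = min ((K - k0) * W) (p * Cap V W K)"
proof -
  have "0 < L / W / real j" using L_pos W_pos assms(2) by simp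
  from gbar_eq_min_phi2[OF assms(1) this] show ?thesis
    unfolding k2T_period_fraction[OF assms(2)] phi2_at_jam_edge .
qed

lemma gbar_lower_bound_W:
  assumes "Kbar V W K \<le> k0" "k0 \<le> K" "0 < T"
  shows "p * (K - k0) * W \<le> gbar L V W K p k0 T"
proof -
  have "phi2 V W K p k0 (Kbar V W K) \<le> phi2 V W K p k0 (k2T L V W K p T)"
    using k2T_mem[OF assms(3)] jam_edge_less_K assms(2) by (intro phi2_mono) auto
  then show ?thesis
    unfolding gbar_eq_min_phi2[OF assms(1,3)] phi2_at_Kbar
    using green_congested_flow_le_green_Cap[OF assms(1)] by simp
qed

lemma gbar_long_cycle_W:
  assumes "Kbar V W K \<le> k0" "L / (p * W) \<le> T"
  shows "gbar L V W K p k0 T = p * (K - k0) * W"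
proof -
  have "0 < L / (p * W)" using L_pos p_pos W_pos by simp
  then have "0 < T" using assms(2) by linarith
  from gbar_eq_min_phi2[OF assms(1) this] show ?thesis
    unfolding k2T_long_cycle[OF assms(2)] phi2_at_Kbar
    using green_congested_flow_le_green_Cap[OF assms(1)] by simp
qed

lemma low_density_regime:
  assumes "0 \<le> k0" "k0 < p * Kbar V W K"
  shows "(\<forall>k1\<in>{p * Kbar V W K .. Kbar V W K}. \<forall>k2\<in>{Kbar V W K .. K - p * Cap V W K / W}.
        gfun V W K p k0 k1 k2 = phi1 V W K p k0 k1)
    \<and> (\<forall>x\<in>{p * Kbar V W K .. Kbar V W K}. \<forall>y\<in>{p * Kbar V W K .. Kbar V W K}.
        x \<le> y \<longrightarrow> phi1 V W K p k0 y \<le> phi1 V W K p k0 x)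
    \<and> (\<forall>T>0. gbar L V W K p k0 T \<le> V * k0)
    \<and> (\<forall>j::nat. j > 0 \<longrightarrow> gbar L V W K p k0 (L / V / real j) = V * k0)
    \<and> (\<forall>T>0. p * V * k0 \<le> gbar L V W K p k0 T)
    \<and> (\<forall>T. T \<ge> L / (p * V) \<longrightarrow> gbar L V W K p k0 T = p * V * k0)"
proof -
  have below_Kbar: "k0 \<le> Kbar V W K" using assms(2) green_Kbar_less by linarith
  have "V * k0 \<le> p * Cap V W K" using assms(2) V_pos unfolding Cap_def by simp
  then have free_flow_min: "min (V * k0) (p * Cap V W K) = V * k0" by simp
  show ?thesis
  proof (intro conjI ballI allI impI)
    fix k1 k2
    assume "k1 \<in> {p * Kbar V W K .. Kbar V W K}" "k2 \<in> {Kbar V W K .. K - p * Cap V W K / W}"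
    then show "gfun V W K p k0 k1 k2 = phi1 V W K p k0 k1"
      using below_Kbar assms(2) green_Kbar_pos jam_edge_less_K phi1_le_green_Cap[of k1 k0]
      by (subst gfun_eq_min_phi1) auto
  next
    fix x y assume "x \<in> {p * Kbar V W K .. Kbar V W K}" "x \<le> y"
    then show "phi1 V W K p k0 y \<le> phi1 V W K p k0 x"
      using assms(1) green_Kbar_pos by (intro phi1_antimono) auto
  next
    fix T :: real assume "0 < T"
    then show "gbar L V W K p k0 T \<le> V * k0"
      using gbar_upper_bound_V[OF assms(1) below_Kbar] by fastforce
  qed (use gbar_period_fraction_V[OF below_Kbar] free_flow_min
        gbar_lower_bound_V[OF assms(1) below_Kbar] gbar_long_cycle_V[OF below_Kbar] in auto)
qed

lemma moderate_low_density_regime: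
  assumes "p * Kbar V W K \<le> k0" "k0 < Kbar V W K"
  shows "(\<forall>k1\<in>{p * Kbar V W K .. Kbar V W K}. \<forall>k2\<in>{Kbar V W K .. K - p * Cap V W K / W}.
        gfun V W K p k0 k1 k2 = min (phi1 V W K p k0 k1) (p * Cap V W K))
    \<and> (\<forall>x\<in>{p * Kbar V W K .. k0}. \<forall>y\<in>{p * Kbar V W K .. k0}.
        min (phi1 V W K p k0 x) (p * Cap V W K) = min (phi1 V W K p k0 y) (p * Cap V W K))
    \<and> (\<forall>x\<in>{k0<..Kbar V W K}. \<forall>y\<in>{k0<..Kbar V W K}. x < y \<longrightarrow>
        min (phi1 V W K p k0 y) (p * Cap V W K) < min (phi1 V W K p k0 x) (p * Cap V W K))
    \<and> (\<forall>T>0. gbar L V W K p k0 T \<le> p * Cap V W K)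
    \<and> (\<exists>T>0. gbar L V W K p k0 T = p * Cap V W K)
    \<and> (\<forall>T>0. p * V * k0 \<le> gbar L V W K p k0 T)
    \<and> (\<forall>T. T \<ge> L / (p * V) \<longrightarrow> gbar L V W K p k0 T = p * V * k0)"
proof -
  have k0_pos: "0 < k0" using assms(1) green_Kbar_pos by linarith
  have below_Kbar: "k0 \<le> Kbar V W K" using assms(2) by simp
  have "p * Cap V W K \<le> V * k0" using assms(1) V_pos unfolding Cap_def by simp
  then have capacity_min: "min (V * k0) (p * Cap V W K) = p * Cap V W K" by simp
  show ?thesis
  proof (intro conjI ballI allI impI)
    fix k1 k2 assume "k2 \<in> {Kbar V W K .. K - p * Cap V W K / W}"
    then show "gfun V W K p k0 k1 k2 = min (phi1 V W K p k0 k1) (p * Cap V W K)"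
      using below_Kbar jam_edge_less_K by (intro gfun_eq_min_phi1) auto
  next
    fix x y assume "x \<in> {p * Kbar V W K .. k0}" "y \<in> {p * Kbar V W K .. k0}"
    then show "min (phi1 V W K p k0 x) (p * Cap V W K) = min (phi1 V W K p k0 y) (p * Cap V W K)"
      using green_Kbar_pos green_Cap_le_phi1[of x k0] green_Cap_le_phi1[of y k0] by auto
  next
    fix x y assume "x \<in> {k0<..Kbar V W K}" "y \<in> {k0<..Kbar V W K}" "x < y"
    then show "min (phi1 V W K p k0 y) (p * Cap V W K) < min (phi1 V W K p k0 x) (p * Cap V W K)"
      using k0_pos phi1_strict_antimono[of k0 x y] phi1_less_green_Cap[of x k0]
        phi1_less_green_Cap[of y k0] by auto
  next
    show "\<exists>T>0. gbar L V W K p k0 T = p * Cap V W K"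
      using gbar_period_fraction_V[OF below_Kbar, of 1] capacity_min L_pos V_pos
      by (intro exI[of _ "L / V"]) simp
  qed (use gbar_upper_bound_V[OF k0_pos[THEN less_imp_le] below_Kbar]
        gbar_lower_bound_V[OF k0_pos[THEN less_imp_le] below_Kbar]
        gbar_long_cycle_V[OF below_Kbar] in fastforce)+
qed

lemma critical_density_regime:
  assumes "k0 = Kbar V W K"
  shows "(\<forall>k1\<in>{p * Kbar V W K .. Kbar V W K}. \<forall>k2\<in>{Kbar V W K .. K - p * Cap V W K / W}.
        gfun V W K p k0 k1 k2 = p * Cap V W K)
    \<and> (\<forall>T>0. gbar L V W K p k0 T = p * Cap V W K)"
proof -
  have gfun_critical: "gfun V W K p k0 k1 k2 = p * Cap V W K"
    if "k1 \<in> {p * Kbar V W K .. Kbar V W K}" "k2 \<in> {Kbar V W K .. K - p * Cap V W K / W}" for k1 k2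
    using that assms green_Kbar_pos jam_edge_less_K green_Cap_le_phi1[of k1 k0]
    by (subst gfun_eq_min_phi1) auto
  show ?thesis
    using gfun_critical k1T_mem k2T_mem unfolding gbar_def by blast
qed

lemma le_jam_edge_iff:
  "k0 \<le> K - p * Cap V W K / W \<longleftrightarrow> p * Cap V W K \<le> (K - k0) * W"
  using W_pos by (simp add: field_simps)

lemma moderate_high_density_regime:
  assumes "Kbar V W K < k0" "k0 \<le> K - p * Cap V W K / W"
  shows "(\<forall>k1\<in>{p * Kbar V W K .. Kbar V W K}. \<forall>k2\<in>{Kbar V W K .. K - p * Cap V W K / W}.
        gfun V W K p k0 k1 k2 = min (phi2 V W K p k0 k2) (p * Cap V W K))
    \<and> (\<forall>x\<in>{Kbar V W K ..< k0}. \<forall>y\<in>{Kbar V W K ..< k0}. x < y \<longrightarrow>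
        min (phi2 V W K p k0 x) (p * Cap V W K) < min (phi2 V W K p k0 y) (p * Cap V W K))
    \<and> (\<forall>x\<in>{k0 .. K - p * Cap V W K / W}. \<forall>y\<in>{k0 .. K - p * Cap V W K / W}.
        min (phi2 V W K p k0 x) (p * Cap V W K) = min (phi2 V W K p k0 y) (p * Cap V W K))
    \<and> (\<forall>T>0. gbar L V W K p k0 T \<le> p * Cap V W K)
    \<and> (\<exists>T>0. gbar L V W K p k0 T = p * Cap V W K)
    \<and> (\<forall>T>0. p * (K - k0) * W \<le> gbar L V W K p k0 T)
    \<and> (\<forall>T. T \<ge> L / (p * W) \<longrightarrow> gbar L V W K p k0 T = p * (K - k0) * W)"
proof -
  have below_K: "k0 < K" using assms(2) jam_edge_less_K by linarith
  have above_Kbar: "Kbar V W K \<le> k0" using assms(1) by simp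
  have capacity_min: "min ((K - k0) * W) (p * Cap V W K) = p * Cap V W K"
    using assms(2) le_jam_edge_iff by simp
  show ?thesis
  proof (intro conjI ballI allI impI)
    fix k1 k2 assume "k1 \<in> {p * Kbar V W K .. Kbar V W K}"
    then show "gfun V W K p k0 k1 k2 = min (phi2 V W K p k0 k2) (p * Cap V W K)"
      using above_Kbar green_Kbar_pos by (intro gfun_eq_min_phi2) auto
  next
    fix x y assume "x \<in> {Kbar V W K ..< k0}" "y \<in> {Kbar V W K ..< k0}" "x < y"
    then show "min (phi2 V W K p k0 x) (p * Cap V W K) < min (phi2 V W K p k0 y) (p * Cap V W K)"
      using below_K phi2_strict_mono[of k0 y x] phi2_less_green_Cap[of x k0]
        phi2_less_green_Cap[of y k0] by auto
  next
    fix x y assume "x \<in> {k0 .. K - p * Cap V W K / W}" "y \<in> {k0 .. K - p * Cap V W K / W}"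
    then show "min (phi2 V W K p k0 x) (p * Cap V W K) = min (phi2 V W K p k0 y) (p * Cap V W K)"
      using jam_edge_less_K green_Cap_le_phi2[of x k0] green_Cap_le_phi2[of y k0] by auto
  next
    show "\<exists>T>0. gbar L V W K p k0 T = p * Cap V W K"
      using gbar_period_fraction_W[OF above_Kbar, of 1] capacity_min L_pos W_pos
      by (intro exI[of _ "L / W"]) simp
  qed (use gbar_upper_bound_W[OF above_Kbar below_K[THEN less_imp_le]]
        gbar_lower_bound_W[OF above_Kbar below_K[THEN less_imp_le]]
        gbar_long_cycle_W[OF above_Kbar] in fastforce)+
qed

lemma high_density_regime:
  assumes "K - p * Cap V W K / W < k0" "k0 \<le> K"
  shows "(\<forall>k1\<in>{p * Kbar V W K .. Kbar V W K}. \<forall>k2\<in>{Kbar V W K .. K - p * Cap V W K / W}.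
        gfun V W K p k0 k1 k2 = phi2 V W K p k0 k2)
    \<and> (\<forall>x\<in>{Kbar V W K .. K - p * Cap V W K / W}. \<forall>y\<in>{Kbar V W K .. K - p * Cap V W K / W}.
        x \<le> y \<longrightarrow> phi2 V W K p k0 x \<le> phi2 V W K p k0 y)
    \<and> (\<forall>T>0. gbar L V W K p k0 T \<le> (K - k0) * W)
    \<and> (\<forall>j::nat. j > 0 \<longrightarrow> gbar L V W K p k0 (L / W / real j) = (K - k0) * W)
    \<and> (\<forall>T>0. p * (K - k0) * W \<le> gbar L V W K p k0 T)
    \<and> (\<forall>T. T \<ge> L / (p * W) \<longrightarrow> gbar L V W K p k0 T = p * (K - k0) * W)"
proof -
  have above_Kbar: "Kbar V W K \<le> k0" using assms(1) Kbar_less_jam_edge by linarith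
  have congested_flow_min: "min ((K - k0) * W) (p * Cap V W K) = (K - k0) * W"
    using assms(1) le_jam_edge_iff[of k0] by simp
  show ?thesis
  proof (intro conjI ballI allI impI)
    fix k1 k2
    assume "k1 \<in> {p * Kbar V W K .. Kbar V W K}" "k2 \<in> {Kbar V W K .. K - p * Cap V W K / W}"
    then show "gfun V W K p k0 k1 k2 = phi2 V W K p k0 k2"
      using above_Kbar assms(1) green_Kbar_pos jam_edge_less_K phi2_le_green_Cap[of k2 k0]
      by (subst gfun_eq_min_phi2) auto
  next
    fix x y assume "y \<in> {Kbar V W K .. K - p * Cap V W K / W}" "x \<le> y"
    then show "phi2 V W K p k0 x \<le> phi2 V W K p k0 y"
      using assms(2) jam_edge_less_K by (intro phi2_mono) auto
  next
    fix T :: real assume "0 < T"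
    then show "gbar L V W K p k0 T \<le> (K - k0) * W"
      using gbar_upper_bound_W[OF above_Kbar assms(2)] by fastforce
  qed (use gbar_period_fraction_W[OF above_Kbar] congested_flow_min
        gbar_lower_bound_W[OF above_Kbar assms(2)] gbar_long_cycle_W[OF above_Kbar] in auto)
qed

end

theorem lemma3p5:
  fixes L V W K p k0 :: real
  defines "Kb \<equiv> Kbar V W K" and "C \<equiv> Cap V W K"
  defines "I1 \<equiv> {p * Kb .. Kb}" and "I2 \<equiv> {Kb .. K - p * C / W}"
  assumes "L > 0" and "V > 0" and "W > 0" and "K > 0"
    and "0 < p" and "p < 1"
    and "0 \<le> k0" and "k0 \<le> K"
  shows
  \<comment> \<open>(1)\<close>
  "(k0 < p * Kb \<longrightarrow>
      (\<forall>k1\<in>I1. \<forall>k2\<in>I2. gfun V W K p k0 k1 k2 = phi1 V W K p k0 k1)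
    \<and> (\<forall>x\<in>I1. \<forall>y\<in>I1. x \<le> y \<longrightarrow> phi1 V W K p k0 y \<le> phi1 V W K p k0 x)
    \<and> (\<forall>T>0. gbar L V W K p k0 T \<le> V * k0)
    \<and> (\<forall>j::nat. j > 0 \<longrightarrow> gbar L V W K p k0 (L / V / real j) = V * k0)
    \<and> (\<forall>T>0. p * V * k0 \<le> gbar L V W K p k0 T)
    \<and> (\<forall>T. T \<ge> L / (p * V) \<longrightarrow> gbar L V W K p k0 T = p * V * k0))
  \<and>
  \<comment> \<open>(2)\<close>
   (p * Kb \<le> k0 \<and> k0 < Kb \<longrightarrow>
      (\<forall>k1\<in>I1. \<forall>k2\<in>I2. gfun V W K p k0 k1 k2 = min (phi1 V W K p k0 k1) (p * C))
    \<and> (\<forall>x\<in>{p * Kb .. k0}. \<forall>y\<in>{p * Kb .. k0}.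
          min (phi1 V W K p k0 x) (p * C) = min (phi1 V W K p k0 y) (p * C))
    \<and> (\<forall>x\<in>{k0<..Kb}. \<forall>y\<in>{k0<..Kb}. x < y \<longrightarrow>
          min (phi1 V W K p k0 y) (p * C) < min (phi1 V W K p k0 x) (p * C))
    \<and> (\<forall>T>0. gbar L V W K p k0 T \<le> p * C)
    \<and> (\<exists>T>0. gbar L V W K p k0 T = p * C)
    \<and> (\<forall>T>0. p * V * k0 \<le> gbar L V W K p k0 T)
    \<and> (\<forall>T. T \<ge> L / (p * V) \<longrightarrow> gbar L V W K p k0 T = p * V * k0))
  \<and>
  \<comment> \<open>(3)\<close>
   (k0 = Kb \<longrightarrow>
      (\<forall>k1\<in>I1. \<forall>k2\<in>I2. gfun V W K p k0 k1 k2 = p * C)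
    \<and> (\<forall>T>0. gbar L V W K p k0 T = p * C))
  \<and>
  \<comment> \<open>(4)\<close>
   (Kb < k0 \<and> k0 \<le> K - p * C / W \<longrightarrow>
      (\<forall>k1\<in>I1. \<forall>k2\<in>I2. gfun V W K p k0 k1 k2 = min (phi2 V W K p k0 k2) (p * C))
    \<and> (\<forall>x\<in>{Kb ..< k0}. \<forall>y\<in>{Kb ..< k0}. x < y \<longrightarrow>
          min (phi2 V W K p k0 x) (p * C) < min (phi2 V W K p k0 y) (p * C))
    \<and> (\<forall>x\<in>{k0 .. K - p * C / W}. \<forall>y\<in>{k0 .. K - p * C / W}.
          min (phi2 V W K p k0 x) (p * C) = min (phi2 V W K p k0 y) (p * C))
    \<and> (\<forall>T>0. gbar L V W K p k0 T \<le> p * C)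
    \<and> (\<exists>T>0. gbar L V W K p k0 T = p * C)
    \<and> (\<forall>T>0. p * (K - k0) * W \<le> gbar L V W K p k0 T)
    \<and> (\<forall>T. T \<ge> L / (p * W) \<longrightarrow> gbar L V W K p k0 T = p * (K - k0) * W))
  \<and>
  \<comment> \<open>(5)\<close>
   (K - p * C / W < k0 \<longrightarrow>
      (\<forall>k1\<in>I1. \<forall>k2\<in>I2. gfun V W K p k0 k1 k2 = phi2 V W K p k0 k2)
    \<and> (\<forall>x\<in>I2. \<forall>y\<in>I2. x \<le> y \<longrightarrow> phi2 V W K p k0 x \<le> phi2 V W K p k0 y)
    \<and> (\<forall>T>0. gbar L V W K p k0 T \<le> (K - k0) * W)
    \<and> (\<forall>j::nat. j > 0 \<longrightarrow> gbar L V W K p k0 (L / W / real j) = (K - k0) * W)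
    \<and> (\<forall>T>0. p * (K - k0) * W \<le> gbar L V W K p k0 T)
    \<and> (\<forall>T. T \<ge> L / (p * W) \<longrightarrow> gbar L V W K p k0 T = p * (K - k0) * W))"
proof -
  interpret signalized_ring L V W K p
    using assms by unfold_locales
  show ?thesis
    unfolding Kb_def C_def I1_def I2_def
    by (intro conjI; intro impI; (elim conjE)?)
      (fact low_density_regime[OF \<open>0 \<le> k0\<close>] moderate_low_density_regime
        critical_density_regime moderate_high_density_regime
        high_density_regime[OF _ \<open>k0 \<le> K\<close>])+
qed

end
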